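(* Let $m,n\in\mathbb{N}$, $g\in\mathcal{H}(\mathbb{D})$, and let $L_g$ be a $g$-operator satisfying \[L_g=L_0+\sum_{j=1}^mL_j\quad\text{on }\mathcal{H}_0(\mathbb{D}),\] where $L_0\in W_g(m,n)$ and $L_j\in\operatorname{span}W_g(m-j,n+j)$ for $j=1,\dots,m$. For $j=0,\dots,m$ let $q_j=\big[\frac{m-j}{n+j}\big]$ and $d_j=m-j-(n+j)q_j$ (quotient and remainder of the division of $m-j$ by $n+j$), and define \[\mathcal{L}_{m,n,j}:=\big(S_g^{q_j+1}T_g\big)^{d_j}\big(S_g^{q_j}T_g\big)^{n+j-d_j}.\] Then $L_g=\mathcal{L}_{m,n,0}+\sum_{j=1}^ma_j\mathcal{L}_{m,n,j}$ on $\mathcal{H}_0(\mathbb{D})$, for some $a_1,\dots,a_m\in\mathbb{C}$. In particular, when $n$ divides $m$, we have $q_0\in\mathbb{N}$, $q_j<q_0$ for $j=1,\dots,m$, and \[L_g=(S_g^{q_0}T_g)^n+\sum_{\substack{1\le j\le m\\ q_j=q_0-1}}c_j\mathcal{L}_{m,n,j}+\sum_{\substack{1\le j\le m\\ q_j<q_0-1}}c_j\mathcal{L}_{m,n,j}\quad\text{on }\mathcal{H}_0(\mathbb{D})\] for some $c_j\in\mathbb{C}$. Moreover, if $n$ divides $m$ and $q_j=q_0-1$ for some $j\in\{1,\dots,m\}$, then $0\le d_j=n-jq_0<n$.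
   Context: $\mathbb{D}$ is the open unit disc, $\mathcal{H}(\mathbb{D})$ the analytic functions on $\mathbb{D}$, $\mathcal{H}_0(\mathbb{D})=\{f\in\mathcal{H}(\mathbb{D}):f(0)=0\}$. For $g\in\mathcal{H}(\mathbb{D})$: $M_gf=fg$, $S_gf(z)=\int_0^zf'(\zeta)g(\zeta)d\zeta$, $T_gf(z)=\int_0^zf(\zeta)g'(\zeta)d\zeta$; powers denote compositions, with zeroth power the identity. A $g$-operator is a finite linear combination (constant coefficients) of finite compositions of $M_g,S_g,T_g$. For $a,b\in\mathbb{N}_0=\mathbb{N}\cup\{0\}$, $W_g(a,b)$ is the set of compositions $L_1\cdots L_{a+b}$ with each $L_j\in\{S_g,T_g\}$, exactly $a$ equal to $S_g$ and $b$ equal to $T_g$; $\operatorname{span}$ is the complex linear span. "$=$ on $\mathcal{H}_0(\mathbb{D})$" means equality of restrictions to $\mathcal{H}_0(\mathbb{D})$. *)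

theory Defs
  imports "HOL-Complex_Analysis.Complex_Analysis"
begin

type_synonym cfun = "complex \<Rightarrow> complex"
type_synonym cop = "cfun \<Rightarrow> cfun"

definition Mop :: "cfun \<Rightarrow> cop" where
  "Mop g f = (\<lambda>z. f z * g z)"
definition Sop :: "cfun \<Rightarrow> cop" where
  "Sop g f = (\<lambda>z. contour_integral (linepath 0 z) (\<lambda>\<zeta>. deriv f \<zeta> * g \<zeta>))"
definition Top :: "cfun \<Rightarrow> cop" where
  "Top g f = (\<lambda>z. contour_integral (linepath 0 z) (\<lambda>\<zeta>. f \<zeta> * deriv g \<zeta>))"

datatype letter = LM | LS | LT

fun letter_op :: "cfun \<Rightarrow> letter \<Rightarrow> cop" where
  "letter_op g LM = Mop g"
| "letter_op g LS = Sop g"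
| "letter_op g LT = Top g"

definition word_op :: "cfun \<Rightarrow> letter list \<Rightarrow> cop" where
  "word_op g w = foldr (\<lambda>l A. letter_op g l \<circ> A) w id"

definition opspan :: "cop set \<Rightarrow> cop set" where
  "opspan A = {L. \<exists>cs :: (complex \<times> cop) list. set (map snd cs) \<subseteq> A \<and>
       L = (\<lambda>f z. sum_list (map (\<lambda>(c, K). c * K f z) cs))}"

definition g_operator :: "cfun \<Rightarrow> cop \<Rightarrow> bool" where
  "g_operator g L \<longleftrightarrow> L \<in> opspan {word_op g w | w. True}"

definition Wg :: "cfun \<Rightarrow> nat \<Rightarrow> nat \<Rightarrow> cop set" where
  "Wg g a b = {word_op g w | w. set w \<subseteq> {LS, LT} \<and> count_list w LS = a \<and> count_list w LT = b}"

definition eq_on_H0 :: "cop \<Rightarrow> cop \<Rightarrow> bool" where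
  "eq_on_H0 A B \<longleftrightarrow> (\<forall>f. f holomorphic_on ball 0 1 \<and> f 0 = 0 \<longrightarrow>
       (\<forall>z\<in>ball 0 1. A f z = B f z))"

definition qq :: "nat \<Rightarrow> nat \<Rightarrow> nat \<Rightarrow> nat" where
  "qq m n j = (m - j) div (n + j)"
definition dd :: "nat \<Rightarrow> nat \<Rightarrow> nat \<Rightarrow> nat" where
  "dd m n j = (m - j) mod (n + j)"

definition calL :: "cfun \<Rightarrow> nat \<Rightarrow> nat \<Rightarrow> nat \<Rightarrow> cop" where
  "calL g m n j = (((Sop g ^^ (qq m n j + 1)) \<circ> Top g) ^^ dd m n j) \<circ>
                  (((Sop g ^^ qq m n j) \<circ> Top g) ^^ (n + j - dd m n j))"

end

theory Submission
  imports Defs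
begin

(* On H_0(D) integration by parts gives S_g f + T_g f = f g. Applying T_g to this, and noting that
   T_g(f g) and S_g(T_g f) both have derivative f g g', yields the commutation rule
   T_g S_g = S_g T_g - T_g^2. Pushing every T_g to the right with this rule
   shows that a word with a letters S_g and b letters T_g equals S_g^a T_g^b plus a linear
   combination of the monomials S_g^i T_g^(a+b-i) with i < a. Hence L_g - calL_{m,n,0} is a
   combination of the monomials S_g^i T_g^(m+n-i) with i < m, while the words calL_{m,n,j},
   j = 1..m, which have m - j letters S_g, form a triangular basis of these monomials. *)

abbreviation disc :: "complex set" where
  "disc \<equiv> ball 0 1"

definition H0 :: "cfun \<Rightarrow> bool" where
  "H0 f \<longleftrightarrow> f holomorphic_on disc \<and> f 0 = 0"

lemma eq_on_H0_iff: "eq_on_H0 A B \<longleftrightarrow> (\<forall>f. H0 f \<longrightarrow> (\<forall>z\<in>disc. A f z = B f z))"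
  unfolding eq_on_H0_def H0_def by auto

lemma eq_on_H0_trans: "eq_on_H0 A B \<Longrightarrow> eq_on_H0 B C \<Longrightarrow> eq_on_H0 A C"
  unfolding eq_on_H0_iff by auto


section \<open>Primitives on the disc\<close>

lemma closed_segment_0_subset_disc: "z \<in> disc \<Longrightarrow> closed_segment 0 z \<subseteq> disc"
  by (simp add: closed_segment_subset convex_ball)

lemma has_field_derivative_deriv_disc:
  "f holomorphic_on disc \<Longrightarrow> w \<in> disc \<Longrightarrow> (f has_field_derivative deriv f w) (at w)"
  using holomorphic_derivI[OF _ open_ball] by blast

lemma contour_integrable_linepath_disc:
  "h holomorphic_on disc \<Longrightarrow> z \<in> disc \<Longrightarrow> h contour_integrable_on linepath 0 z"
  by (rule contour_integrable_holomorphic_simple[OF _ open_ball])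
     (use closed_segment_0_subset_disc[of z] in auto)

lemma has_field_derivative_linepath_integral:
  assumes h: "h holomorphic_on disc" and z: "z \<in> disc"
  shows "((\<lambda>z. contour_integral (linepath 0 z) h) has_field_derivative h z) (at z)"
proof -
  obtain G where G: "\<And>x. x \<in> disc \<Longrightarrow> (G has_field_derivative h x) (at x within disc)"
    using holomorphic_convex_primitive'[OF convex_ball open_ball h] by blast
  have G_integral: "contour_integral (linepath 0 w) h = G w - G 0" if "w \<in> disc" for w
    using contour_integral_primitive[OF G, of "linepath 0 w"] closed_segment_0_subset_disc[OF that]
    by (simp add: contour_integral_unique)
  have "((\<lambda>w. G w - G 0) has_field_derivative h z) (at z)"
    using G[OF z] at_within_open[OF z open_ball] by (auto intro!: derivative_eq_intros)
  then show ?thesis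
    by (rule has_field_derivative_transform_within_open[where S=disc]) (use z G_integral in auto)
qed

lemma linepath_integral_cong_disc:
  "(\<And>w. w \<in> disc \<Longrightarrow> h1 w = h2 w) \<Longrightarrow> z \<in> disc \<Longrightarrow>
   contour_integral (linepath 0 z) h1 = contour_integral (linepath 0 z) h2"
  by (rule contour_integral_eq) (use closed_segment_0_subset_disc[of z] in auto)

lemma eq_on_disc_if_has_field_derivative:
  assumes F: "\<And>w. w \<in> disc \<Longrightarrow> (F has_field_derivative D w) (at w)"
    and G: "\<And>w. w \<in> disc \<Longrightarrow> (G has_field_derivative D w) (at w)"
    and "F 0 = G 0" and z: "z \<in> disc"
  shows "F z = G z"
proof -
  have "\<exists>c. \<forall>x\<in>disc. F x - G x = c"
  proof (rule has_field_derivative_zero_constant[OF convex_ball])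
    fix x assume "x \<in> disc"
    then have "((\<lambda>x. F x - G x) has_field_derivative D x - D x) (at x)"
      using F G by (auto intro!: derivative_eq_intros)
    then show "((\<lambda>x. F x - G x) has_field_derivative 0) (at x within disc)"
      by (simp add: has_field_derivative_at_within)
  qed
  then have "F z - G z = F 0 - G 0" using z by force
  then show ?thesis using \<open>F 0 = G 0\<close> by simp
qed

lemma deriv_cong_disc: "(\<And>w. w \<in> disc \<Longrightarrow> f1 w = f2 w) \<Longrightarrow> w \<in> disc \<Longrightarrow> deriv f1 w = deriv f2 w"
proof (rule deriv_cong_ev)
  assume eq: "\<And>w. w \<in> disc \<Longrightarrow> f1 w = f2 w" and "w \<in> disc"
  have "\<forall>\<^sub>F x in nhds w. x \<in> disc"
    by (rule eventually_nhds_in_open[OF open_ball \<open>w \<in> disc\<close>])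
  then show "\<forall>\<^sub>F x in nhds w. f1 x = f2 x"
    by (rule eventually_mono) (rule eq)
qed simp


(* Linearity is only asked for on holomorphic functions, since S_g involves deriv. *)
definition disc_linear :: "cop \<Rightarrow> bool" where
  "disc_linear P \<longleftrightarrow>
     (\<forall>f. f holomorphic_on disc \<longrightarrow> H0 (P f)) \<and>
     (\<forall>f1 f2. (\<forall>w\<in>disc. f1 w = f2 w) \<longrightarrow> (\<forall>z\<in>disc. P f1 z = P f2 z)) \<and>
     (\<forall>(I :: nat set) c F. finite I \<longrightarrow> (\<forall>i\<in>I. F i holomorphic_on disc) \<longrightarrow>
        (\<forall>z\<in>disc. P (\<lambda>w. \<Sum>i\<in>I. c i * F i w) z = (\<Sum>i\<in>I. c i * P (F i) z)))"

lemma disc_linear_H0: "disc_linear P \<Longrightarrow> f holomorphic_on disc \<Longrightarrow> H0 (P f)"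
  unfolding disc_linear_def by blast

lemma disc_linear_cong:
  "disc_linear P \<Longrightarrow> (\<And>w. w \<in> disc \<Longrightarrow> f1 w = f2 w) \<Longrightarrow> z \<in> disc \<Longrightarrow> P f1 z = P f2 z"
  unfolding disc_linear_def by blast

lemma disc_linear_sum:
  "disc_linear P \<Longrightarrow> finite (I :: nat set) \<Longrightarrow> (\<And>i. i \<in> I \<Longrightarrow> F i holomorphic_on disc) \<Longrightarrow>
   z \<in> disc \<Longrightarrow> P (\<lambda>w. \<Sum>i\<in>I. c i * F i w) z = (\<Sum>i\<in>I. c i * P (F i) z)"
  unfolding disc_linear_def by blast

lemma H0_funpow: "disc_linear P \<Longrightarrow> H0 f \<Longrightarrow> H0 ((P ^^ k) f)"
  by (induction k) (auto simp: H0_def dest: disc_linear_H0)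

lemma disc_linear_linepath_integral:
  fixes K :: "cfun \<Rightarrow> cfun"
  assumes K_holomorphic: "\<And>f. f holomorphic_on disc \<Longrightarrow> K f holomorphic_on disc"
    and K_cong: "\<And>f1 f2 w. (\<And>w. w \<in> disc \<Longrightarrow> f1 w = f2 w) \<Longrightarrow> w \<in> disc \<Longrightarrow> K f1 w = K f2 w"
    and K_sum: "\<And>(I :: nat set) c F w. finite I \<Longrightarrow> (\<And>i. i \<in> I \<Longrightarrow> F i holomorphic_on disc) \<Longrightarrow>
        w \<in> disc \<Longrightarrow> K (\<lambda>w. \<Sum>i\<in>I. c i * F i w) w = (\<Sum>i\<in>I. c i * K (F i) w)"
  shows "disc_linear (\<lambda>f z. contour_integral (linepath 0 z) (K f))"
  unfolding disc_linear_def
proof (intro conjI allI impI ballI)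
  fix f :: cfun assume "f holomorphic_on disc"
  then have "(\<lambda>z. contour_integral (linepath 0 z) (K f)) field_differentiable at x within disc"
    if "x \<in> disc" for x
    using has_field_derivative_linepath_integral[OF K_holomorphic that]
    by (metis field_differentiable_at_within field_differentiable_def)
  then show "H0 (\<lambda>z. contour_integral (linepath 0 z) (K f))"
    by (simp add: H0_def holomorphic_on_def)
next
  fix f1 f2 :: cfun and z assume "\<forall>w\<in>disc. f1 w = f2 w" "z \<in> disc"
  then show "contour_integral (linepath 0 z) (K f1) = contour_integral (linepath 0 z) (K f2)"
    by (intro linepath_integral_cong_disc K_cong) auto
next
  fix I :: "nat set" and c F z
  assume I: "finite I" and F: "\<forall>i\<in>I. F i holomorphic_on disc" and z: "z \<in> disc"
  have integrable: "K (F i) contour_integrable_on linepath 0 z" if "i \<in> I" for i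
    using contour_integrable_linepath_disc[OF K_holomorphic z] F that by blast
  have "contour_integral (linepath 0 z) (K (\<lambda>w. \<Sum>i\<in>I. c i * F i w))
      = contour_integral (linepath 0 z) (\<lambda>w. \<Sum>i\<in>I. c i * K (F i) w)"
    by (intro linepath_integral_cong_disc K_sum I) (use F z in auto)
  also have "\<dots> = (\<Sum>i\<in>I. c i * contour_integral (linepath 0 z) (K (F i)))"
    using integrable by (simp add: contour_integral_sum[OF I] contour_integrable_lmul
        contour_integral_lmul)
  finally show "contour_integral (linepath 0 z) (K (\<lambda>w. \<Sum>i\<in>I. c i * F i w))
      = (\<Sum>i\<in>I. c i * contour_integral (linepath 0 z) (K (F i)))" .
qed


context
  fixes g :: cfun
  assumes g: "g holomorphic_on disc"
begin

lemma disc_linear_Sop: "disc_linear (Sop g)"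
  unfolding Sop_def[abs_def]
proof (rule disc_linear_linepath_integral[where K="\<lambda>f \<zeta>. deriv f \<zeta> * g \<zeta>"])
  show "(\<lambda>\<zeta>. deriv f \<zeta> * g \<zeta>) holomorphic_on disc" if "f holomorphic_on disc" for f
    using holomorphic_deriv[OF that open_ball] g by (auto intro!: holomorphic_intros)
  show "deriv f1 w * g w = deriv f2 w * g w"
    if "\<And>w. w \<in> disc \<Longrightarrow> f1 w = f2 w" "w \<in> disc" for f1 f2 w
    using deriv_cong_disc[OF that] by simp
  show "deriv (\<lambda>w. \<Sum>i\<in>I. c i * F i w) w * g w = (\<Sum>i\<in>I. c i * (deriv (F i) w * g w))"
    if "finite I" "\<And>i. i \<in> I \<Longrightarrow> F i holomorphic_on disc" "w \<in> disc"
    for I :: "nat set" and c F w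
  proof -
    have "((\<lambda>w. \<Sum>i\<in>I. c i * F i w) has_field_derivative (\<Sum>i\<in>I. c i * deriv (F i) w)) (at w)"
      by (intro DERIV_sum DERIV_cmult has_field_derivative_deriv_disc) (use that in auto)
    then show ?thesis by (simp add: DERIV_imp_deriv sum_distrib_right mult.assoc)
  qed
qed

lemma disc_linear_Top: "disc_linear (Top g)"
  unfolding Top_def[abs_def]
proof (rule disc_linear_linepath_integral[where K="\<lambda>f \<zeta>. f \<zeta> * deriv g \<zeta>"])
  show "(\<lambda>\<zeta>. f \<zeta> * deriv g \<zeta>) holomorphic_on disc" if "f holomorphic_on disc" for f
    using holomorphic_deriv[OF g open_ball] that by (auto intro!: holomorphic_intros)
qed (auto simp: sum_distrib_right mult.assoc)

lemma Sop_has_field_derivative: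
  "f holomorphic_on disc \<Longrightarrow> z \<in> disc \<Longrightarrow> (Sop g f has_field_derivative deriv f z * g z) (at z)"
  unfolding Sop_def
  by (rule has_field_derivative_linepath_integral[OF holomorphic_on_mult[OF holomorphic_deriv[OF _ open_ball] g]])

lemma Top_has_field_derivative:
  "f holomorphic_on disc \<Longrightarrow> z \<in> disc \<Longrightarrow> (Top g f has_field_derivative f z * deriv g z) (at z)"
  unfolding Top_def
  by (rule has_field_derivative_linepath_integral[OF holomorphic_on_mult[OF _ holomorphic_deriv[OF g open_ball]]])

lemma Sop_plus_Top:
  assumes "H0 f" "z \<in> disc"
  shows "Sop g f z + Top g f z = f z * g z"
proof (rule eq_on_disc_if_has_field_derivative[where F="\<lambda>w. Sop g f w + Top g f w"
      and G="\<lambda>w. f w * g w" and D="\<lambda>w. deriv f w * g w + f w * deriv g w"])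
  fix w assume "w \<in> disc"
  with \<open>H0 f\<close> show "((\<lambda>w. Sop g f w + Top g f w) has_field_derivative
      deriv f w * g w + f w * deriv g w) (at w)"
    "((\<lambda>w. f w * g w) has_field_derivative deriv f w * g w + f w * deriv g w) (at w)"
    unfolding H0_def
    by (auto intro!: DERIV_add DERIV_cong[OF DERIV_mult] Sop_has_field_derivative
        Top_has_field_derivative has_field_derivative_deriv_disc g)
qed (use assms in \<open>simp_all add: H0_def Sop_def Top_def\<close>)

lemma Top_Sop:
  assumes f: "H0 f" and z: "z \<in> disc"
  shows "Top g (Sop g f) z = Sop g (Top g f) z - Top g (Top g f) z"
proof -
  have hol: "f holomorphic_on disc" "Sop g f holomorphic_on disc" "Top g f holomorphic_on disc"
    using f disc_linear_H0[OF disc_linear_Sop] disc_linear_H0[OF disc_linear_Top]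
    by (auto simp: H0_def)
  have "Top g (Sop g f) z + Top g (Top g f) z = Sop g (Top g f) z"
  proof (rule eq_on_disc_if_has_field_derivative[where F="\<lambda>w. Top g (Sop g f) w + Top g (Top g f) w"
        and G="Sop g (Top g f)" and D="\<lambda>w. (Sop g f w + Top g f w) * deriv g w"])
    fix w assume w: "w \<in> disc"
    show "((\<lambda>w. Top g (Sop g f) w + Top g (Top g f) w) has_field_derivative
        (Sop g f w + Top g f w) * deriv g w) (at w)"
      using w hol by (auto intro!: DERIV_cong[OF DERIV_add] Top_has_field_derivative
          simp: distrib_right)
    have "deriv (Top g f) w = f w * deriv g w"
      using Top_has_field_derivative[OF hol(1) w] by (rule DERIV_imp_deriv)
    then show "(Sop g (Top g f) has_field_derivative (Sop g f w + Top g f w) * deriv g w) (at w)"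
      using Sop_has_field_derivative[OF hol(3) w] Sop_plus_Top[OF f w] by (simp add: mult_ac)
  qed (use z in \<open>simp_all add: Sop_def Top_def\<close>)
  then show ?thesis by (simp add: algebra_simps)
qed

end


section \<open>Monomials S_g^i T_g^(L-i) and triangular expansions\<close>

definition ST_monomial :: "cfun \<Rightarrow> nat \<Rightarrow> nat \<Rightarrow> cop" where
  "ST_monomial g L i = (Sop g ^^ i) \<circ> (Top g ^^ (L - i))"

definition below :: "cfun \<Rightarrow> nat \<Rightarrow> nat \<Rightarrow> cop \<Rightarrow> bool" where
  "below g L s A \<longleftrightarrow> (\<exists>c. eq_on_H0 A (\<lambda>f z. \<Sum>i<s. c i * ST_monomial g L i f z))"

definition leads :: "cfun \<Rightarrow> nat \<Rightarrow> nat \<Rightarrow> cop \<Rightarrow> bool" where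
  "leads g L s A \<longleftrightarrow> below g L s (\<lambda>f z. A f z - ST_monomial g L s f z)"

lemma below_cong: "eq_on_H0 A B \<Longrightarrow> below g L s B \<Longrightarrow> below g L s A"
  unfolding below_def using eq_on_H0_trans by blast

lemma leads_cong: "eq_on_H0 A B \<Longrightarrow> leads g L s B \<Longrightarrow> leads g L s A"
  unfolding leads_def by (erule below_cong[rotated]) (simp add: eq_on_H0_iff)

lemma below_zero: "below g L s (\<lambda>f z. 0)"
  unfolding below_def eq_on_H0_iff by (auto intro: exI[of _ "\<lambda>_. 0"])

lemma below_add:
  assumes "below g L s A" and "below g L s B"
  shows "below g L s (\<lambda>f z. A f z + B f z)"
proof -
  obtain a b where "eq_on_H0 A (\<lambda>f z. \<Sum>i<s. a i * ST_monomial g L i f z)"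
    and "eq_on_H0 B (\<lambda>f z. \<Sum>i<s. b i * ST_monomial g L i f z)"
    using assms unfolding below_def by blast
  then show ?thesis
    unfolding below_def eq_on_H0_iff
    by (intro exI[of _ "\<lambda>i. a i + b i"]) (simp add: distrib_right sum.distrib)
qed

lemma below_scale:
  assumes "below g L s A"
  shows "below g L s (\<lambda>f z. k * A f z)"
proof -
  obtain a where "eq_on_H0 A (\<lambda>f z. \<Sum>i<s. a i * ST_monomial g L i f z)"
    using assms unfolding below_def by blast
  then show ?thesis
    unfolding below_def eq_on_H0_iff
    by (intro exI[of _ "\<lambda>i. k * a i"]) (simp add: sum_distrib_left mult.assoc)
qed

lemma below_sum:
  "finite I \<Longrightarrow> (\<And>i. i \<in> I \<Longrightarrow> below g L s (B i)) \<Longrightarrow> below g L s (\<lambda>f z. \<Sum>i\<in>I. c i * B i f z)"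
proof (induction I rule: finite_induct)
  case empty
  then show ?case by (simp add: below_zero)
next
  case (insert x I)
  then have "below g L s (\<lambda>f z. c x * B x f z + (\<Sum>i\<in>I. c i * B i f z))"
    by (intro below_add below_scale) auto
  then show ?case using insert by simp
qed

lemma below_mono: "below g L s A \<Longrightarrow> s \<le> s' \<Longrightarrow> below g L s' A"
  unfolding below_def
proof (elim exE)
  fix c assume "eq_on_H0 A (\<lambda>f z. \<Sum>i<s. c i * ST_monomial g L i f z)" "s \<le> s'"
  moreover have "(\<Sum>i<s'. (if i < s then c i else 0) * ST_monomial g L i f z)
      = (\<Sum>i<s. c i * ST_monomial g L i f z)" for f z
    using \<open>s \<le> s'\<close> by (intro sum.mono_neutral_cong_right) auto
  ultimately show "\<exists>c. eq_on_H0 A (\<lambda>f z. \<Sum>i<s'. c i * ST_monomial g L i f z)"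
    by (intro exI[of _ "\<lambda>i. if i < s then c i else 0"]) (simp add: eq_on_H0_iff)
qed

lemma below_ST_monomial: "i < s \<Longrightarrow> below g L s (ST_monomial g L i)"
  unfolding below_def eq_on_H0_iff
  by (rule exI[of _ "\<lambda>k. of_bool (k = i)"]) simp

lemma leads_ST_monomial: "leads g L s (ST_monomial g L s)"
  unfolding leads_def by (simp add: below_zero)

lemma leads_imp_below:
  assumes "leads g L s A"
  shows "below g L (Suc s) A"
proof -
  have "below g L (Suc s) (\<lambda>f z. (A f z - ST_monomial g L s f z) + ST_monomial g L s f z)"
    using below_mono[OF assms[unfolded leads_def]] below_ST_monomial[of s "Suc s" g L]
    by (intro below_add) simp_all
  then show ?thesis by simp
qed

lemma leads_add_below:
  assumes "leads g L s A" and "below g L s Y"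
  shows "leads g L s (\<lambda>f z. A f z + Y f z)"
proof -
  have "below g L s (\<lambda>f z. (A f z - ST_monomial g L s f z) + Y f z)"
    using assms unfolding leads_def by (rule below_add)
  then show ?thesis
    unfolding leads_def by (rule below_cong[rotated]) (simp add: eq_on_H0_iff)
qed

lemma leads_combination:
  assumes "leads g L s A"
  obtains c where "eq_on_H0 A (\<lambda>f z. \<Sum>i<Suc s. c i * ST_monomial g L i f z)" and "c s = 1"
proof -
  obtain c where c: "eq_on_H0 (\<lambda>f z. A f z - ST_monomial g L s f z)
      (\<lambda>f z. \<Sum>i<s. c i * ST_monomial g L i f z)"
    using assms unfolding leads_def below_def by blast
  have "(\<Sum>i<s. (c(s := 1)) i * ST_monomial g L i f z) = (\<Sum>i<s. c i * ST_monomial g L i f z)"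
    for f z by (rule sum.cong) auto
  with c have "eq_on_H0 A (\<lambda>f z. \<Sum>i<Suc s. (c(s := 1)) i * ST_monomial g L i f z)"
    by (simp add: eq_on_H0_iff diff_eq_eq)
  then show ?thesis by (rule that) simp
qed

lemma below_triangular:
  assumes "\<And>i. i < s \<Longrightarrow> leads g L i (B i)" and "below g L s Z"
  shows "\<exists>a. eq_on_H0 Z (\<lambda>f z. \<Sum>i<s. a i * B i f z)"
  using assms
proof (induction s arbitrary: Z)
  case 0
  then show ?case by (simp add: below_def)
next
  case (Suc s)
  obtain c where c: "eq_on_H0 Z (\<lambda>f z. \<Sum>i<Suc s. c i * ST_monomial g L i f z)"
    using Suc.prems(2) unfolding below_def by blast
  \<comment> \<open>Subtracting c_s times the leading term B_s leaves a combination of lower monomials.\<close>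
  have "below g L s (\<lambda>f z. (\<Sum>i<s. c i * ST_monomial g L i f z)
      + (- c s) * (B s f z - ST_monomial g L s f z))"
    using Suc.prems(1)[of s] unfolding leads_def
    by (intro below_add below_scale) (auto simp: below_def eq_on_H0_iff)
  moreover have "eq_on_H0 (\<lambda>f z. Z f z - c s * B s f z) (\<lambda>f z. (\<Sum>i<s. c i * ST_monomial g L i f z)
      + (- c s) * (B s f z - ST_monomial g L s f z))"
    using c by (simp add: eq_on_H0_iff algebra_simps)
  ultimately have "below g L s (\<lambda>f z. Z f z - c s * B s f z)"
    by (rule below_cong[rotated])
  moreover have "\<And>i. i < s \<Longrightarrow> leads g L i (B i)"
    using Suc.prems(1) by simp
  ultimately obtain a where a: "eq_on_H0 (\<lambda>f z. Z f z - c s * B s f z) (\<lambda>f z. \<Sum>i<s. a i * B i f z)"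
    using Suc.IH by blast
  have "(\<Sum>i<s. (a(s := c s)) i * B i f z) = (\<Sum>i<s. a i * B i f z)" for f z
    by (rule sum.cong) auto
  with a have "eq_on_H0 Z (\<lambda>f z. \<Sum>i<Suc s. (a(s := c s)) i * B i f z)"
    by (simp add: eq_on_H0_iff diff_eq_eq)
  then show ?case by blast
qed

context
  fixes g :: cfun
  assumes g: "g holomorphic_on disc"
begin

lemma H0_ST_monomial: "H0 f \<Longrightarrow> H0 (ST_monomial g L i f)"
  unfolding ST_monomial_def by (simp add: H0_funpow disc_linear_Sop[OF g] disc_linear_Top[OF g])

lemma disc_linear_comp_combination:
  assumes P: "disc_linear P" and "finite I"
    and X: "eq_on_H0 X (\<lambda>f z. \<Sum>i\<in>I. c i * ST_monomial g L i f z)"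
  shows "eq_on_H0 (P \<circ> X) (\<lambda>f z. \<Sum>i\<in>I. c i * (P \<circ> ST_monomial g L i) f z)"
  unfolding eq_on_H0_iff
proof (intro allI impI ballI)
  fix f z assume f: "H0 f" and z: "z \<in> disc"
  have "P (X f) z = P (\<lambda>w. \<Sum>i\<in>I. c i * ST_monomial g L i f w) z"
    by (rule disc_linear_cong[OF P _ z]) (use X f in \<open>simp add: eq_on_H0_iff\<close>)
  also have "\<dots> = (\<Sum>i\<in>I. c i * P (ST_monomial g L i f) z)"
    by (rule disc_linear_sum[OF P \<open>finite I\<close> _ z]) (use H0_ST_monomial[OF f] in \<open>simp add: H0_def\<close>)
  finally show "(P \<circ> X) f z = (\<Sum>i\<in>I. c i * (P \<circ> ST_monomial g L i) f z)" by simp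
qed

lemma below_comp:
  assumes P: "disc_linear P" and "\<And>i. i < s \<Longrightarrow> below g L' s' (P \<circ> ST_monomial g L i)"
    and "below g L s X"
  shows "below g L' s' (P \<circ> X)"
proof -
  obtain c where "eq_on_H0 X (\<lambda>f z. \<Sum>i<s. c i * ST_monomial g L i f z)"
    using \<open>below g L s X\<close> unfolding below_def by blast
  from disc_linear_comp_combination[OF P finite_lessThan this] show ?thesis
    by (rule below_cong) (intro below_sum assms(2), auto)
qed

lemma leads_comp:
  assumes P: "disc_linear P" and lead: "leads g L' s' (P \<circ> ST_monomial g L s)"
    and lower: "\<And>i. i < s \<Longrightarrow> below g L' s' (P \<circ> ST_monomial g L i)"
    and "leads g L s A"
  shows "leads g L' s' (P \<circ> A)"
proof -
  obtain c where A: "eq_on_H0 A (\<lambda>f z. \<Sum>i<Suc s. c i * ST_monomial g L i f z)" and "c s = 1"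
    using leads_combination[OF \<open>leads g L s A\<close>] by blast
  have "eq_on_H0 (P \<circ> A) (\<lambda>f z. \<Sum>i<Suc s. c i * (P \<circ> ST_monomial g L i) f z)"
    by (rule disc_linear_comp_combination[OF P finite_lessThan A])
  then have "eq_on_H0 (P \<circ> A) (\<lambda>f z. (P \<circ> ST_monomial g L s) f z
      + (\<Sum>i<s. c i * (P \<circ> ST_monomial g L i) f z))"
    using \<open>c s = 1\<close> by (simp add: add.commute)
  moreover have "leads g L' s' (\<lambda>f z. (P \<circ> ST_monomial g L s) f z
      + (\<Sum>i<s. c i * (P \<circ> ST_monomial g L i) f z))"
  proof (rule leads_add_below[OF lead])
    show "below g L' s' (\<lambda>f z. \<Sum>i<s. c i * (P \<circ> ST_monomial g L i) f z)"
      by (rule below_sum) (use lower in \<open>simp_all add: comp_def\<close>)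
  qed
  ultimately show ?thesis by (rule leads_cong)
qed

lemma Sop_comp_ST_monomial: "Sop g \<circ> ST_monomial g L i = ST_monomial g (Suc L) (Suc i)"
  by (simp add: ST_monomial_def comp_assoc)

lemma leads_Sop: "leads g L s A \<Longrightarrow> leads g (Suc L) (Suc s) (Sop g \<circ> A)"
  by (rule leads_comp[OF disc_linear_Sop[OF g]])
     (simp_all add: Sop_comp_ST_monomial leads_ST_monomial below_ST_monomial)

lemma Top_comp_ST_monomial_Suc:
  "eq_on_H0 (Top g \<circ> ST_monomial g (Suc L) (Suc k))
     (\<lambda>f z. (Sop g \<circ> (Top g \<circ> ST_monomial g L k)) f z
        + (-1) * (Top g \<circ> (Top g \<circ> ST_monomial g L k)) f z)"
  unfolding eq_on_H0_iff
proof (intro allI impI ballI)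
  fix f z assume "H0 f" "z \<in> disc"
  with Top_Sop[OF g H0_ST_monomial] show "(Top g \<circ> ST_monomial g (Suc L) (Suc k)) f z
      = (Sop g \<circ> (Top g \<circ> ST_monomial g L k)) f z + (-1) * (Top g \<circ> (Top g \<circ> ST_monomial g L k)) f z"
    by (simp add: Sop_comp_ST_monomial[symmetric])
qed

lemma leads_Top_ST_monomial: "i \<le> L \<Longrightarrow> leads g (Suc L) i (Top g \<circ> ST_monomial g L i)"
proof (induction i arbitrary: L rule: less_induct)
  case (less i)
  show ?case
  proof (cases i)
    case 0
    have "Top g \<circ> ST_monomial g L 0 = ST_monomial g (Suc L) 0"
      by (simp add: ST_monomial_def)
    then show ?thesis using 0 leads_ST_monomial by simp
  next
    case (Suc k)
    with less.prems obtain L' where L: "L = Suc L'" and "k \<le> L'"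
      by (cases L) auto
    have IH_k: "leads g (Suc L') k (Top g \<circ> ST_monomial g L' k)"
      using less.IH \<open>k \<le> L'\<close> Suc by blast
    have "below g (Suc (Suc L')) (Suc k) (Top g \<circ> (Top g \<circ> ST_monomial g L' k))"
    proof (rule below_comp[OF disc_linear_Top[OF g] _ leads_imp_below[OF IH_k]])
      fix j assume "j < Suc k"
      have "leads g (Suc (Suc L')) j (Top g \<circ> ST_monomial g (Suc L') j)"
        by (rule less.IH) (use Suc \<open>j < Suc k\<close> \<open>k \<le> L'\<close> in auto)
      then show "below g (Suc (Suc L')) (Suc k) (Top g \<circ> ST_monomial g (Suc L') j)"
        using \<open>j < Suc k\<close> by (auto dest: leads_imp_below intro: below_mono)
    qed
    then have "leads g (Suc (Suc L')) (Suc k) (\<lambda>f z. (Sop g \<circ> (Top g \<circ> ST_monomial g L' k)) f z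
        + (-1) * (Top g \<circ> (Top g \<circ> ST_monomial g L' k)) f z)"
      by (intro leads_add_below leads_Sop IH_k below_scale)
    with Top_comp_ST_monomial_Suc show ?thesis
      unfolding L Suc by (rule leads_cong)
  qed
qed

lemma leads_Top:
  assumes "s \<le> L" and "leads g L s A"
  shows "leads g (Suc L) s (Top g \<circ> A)"
proof (rule leads_comp[OF disc_linear_Top[OF g] leads_Top_ST_monomial[OF \<open>s \<le> L\<close>] _ \<open>leads g L s A\<close>])
  fix i assume "i < s"
  with \<open>s \<le> L\<close> have "below g (Suc L) (Suc i) (Top g \<circ> ST_monomial g L i)"
    by (intro leads_imp_below leads_Top_ST_monomial) simp
  then show "below g (Suc L) s (Top g \<circ> ST_monomial g L i)"
    by (rule below_mono) (use \<open>i < s\<close> in simp)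
qed

end


section \<open>Words in S_g and T_g\<close>

lemma word_op_Nil: "word_op g [] = id"
  by (simp add: word_op_def)

lemma word_op_Cons: "word_op g (l # w) = letter_op g l \<circ> word_op g w"
  by (simp add: word_op_def)

lemma word_op_append: "word_op g (u @ v) = word_op g u \<circ> word_op g v"
  by (induction u) (simp_all add: word_op_Nil word_op_Cons comp_assoc)

lemma word_op_replicate_LS: "word_op g (replicate k LS) = Sop g ^^ k"
  by (induction k) (simp_all add: word_op_Nil word_op_Cons)

lemma word_op_concat_replicate: "word_op g (concat (replicate k u)) = word_op g u ^^ k"
  by (induction k) (simp_all add: word_op_Nil word_op_append)

lemma count_list_replicate: "count_list (replicate k y) x = (if y = x then k else 0)"
  by (induction k) auto

lemma length_eq_count_list_LS_LT:
  "set w \<subseteq> {LS, LT} \<Longrightarrow> length w = count_list w LS + count_list w LT"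
  by (induction w) auto

lemma leads_word_op:
  assumes g: "g holomorphic_on disc" and "set w \<subseteq> {LS, LT}"
  shows "leads g (length w) (count_list w LS) (word_op g w)"
  using assms(2)
proof (induction w)
  case Nil
  have "word_op g [] = ST_monomial g 0 0"
    by (simp add: word_op_Nil ST_monomial_def)
  then show ?case by (simp add: leads_ST_monomial)
next
  case (Cons l w)
  then have IH: "leads g (length w) (count_list w LS) (word_op g w)"
    and "l = LS \<or> l = LT" by auto
  then show ?case
    using leads_Sop[OF g IH] leads_Top[OF g count_le_length IH] by (auto simp: word_op_Cons comp_def)
qed

lemma Wg_leads: "g holomorphic_on disc \<Longrightarrow> K \<in> Wg g a b \<Longrightarrow> leads g (a + b) a K"
  unfolding Wg_def using leads_word_op length_eq_count_list_LS_LT by fastforce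

lemma opspan_below:
  assumes "\<And>K. K \<in> A \<Longrightarrow> below g L s K" and "M \<in> opspan A"
  shows "below g L s M"
proof -
  obtain cs where cs: "set (map snd cs) \<subseteq> A"
    and M: "M = (\<lambda>f z. sum_list (map (\<lambda>(c, K). c * K f z) cs))"
    using assms(2) unfolding opspan_def by blast
  from cs have "below g L s (\<lambda>f z. sum_list (map (\<lambda>(c, K). c * K f z) cs))"
  proof (induction cs)
    case Nil
    then show ?case by (simp add: below_zero)
  next
    case (Cons p cs)
    then show ?case
      using assms(1) by (cases p) (auto intro!: below_add below_scale)
  qed
  then show ?thesis using M by simp
qed

lemma calL_in_Wg:
  assumes "0 < n"
  shows "calL g m n j \<in> Wg g (m - j) (n + j)"
proof -
  define q where "q = qq m n j"
  define d where "d = dd m n j"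
  have "d < n + j" using assms by (simp add: d_def dd_def)
  have "d * q \<le> (n + j) * q" using \<open>d < n + j\<close> by simp
  then have "d * Suc q + (n + j - d) * q = (n + j) * q + d"
    by (simp add: diff_mult_distrib)
  also have "\<dots> = m - j"
    by (simp add: q_def d_def qq_def dd_def)
  finally have count_LS: "d * Suc q + (n + j - d) * q = m - j" .
  define w where "w = concat (replicate d (replicate (Suc q) LS @ [LT]))
                    @ concat (replicate (n + j - d) (replicate q LS @ [LT]))"
  have "calL g m n j = word_op g w"
    by (simp add: w_def calL_def q_def d_def word_op_append word_op_concat_replicate
        word_op_replicate_LS word_op_Cons word_op_Nil comp_assoc)
  moreover have "set w \<subseteq> {LS, LT}" "count_list w LS = m - j" "count_list w LT = n + j"
    using count_LS \<open>d < n + j\<close>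
    by (auto simp: w_def count_list_concat count_list_replicate sum_list_replicate)
  ultimately show ?thesis unfolding Wg_def by blast
qed


section \<open>Quotients and remainders\<close>

lemma qq_0_pos: "n dvd m \<Longrightarrow> 0 < m \<Longrightarrow> 1 \<le> qq m n 0"
  by (elim dvdE) (auto simp: qq_def)

lemma qq_less_qq_0:
  assumes "n dvd m" "0 < n" "1 \<le> j" "j \<le> m"
  shows "qq m n j < qq m n 0"
proof -
  obtain q0 where m: "m = n * q0" using assms(1) by (rule dvdE)
  have "n * qq m n j \<le> (n + j) * qq m n j" by simp
  also have "\<dots> \<le> m - j"
    unfolding qq_def by (rule times_div_less_eq_dividend)
  also have "\<dots> < n * q0" using m assms(3,4) by simp
  finally show ?thesis using m assms(2) by (simp add: qq_def)
qed

lemma dd_eq_if_qq_eq_qq_0_minus_1: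
  assumes "n dvd m" "0 < n" "1 \<le> j" "j \<le> m" "qq m n j = qq m n 0 - 1"
  shows "0 \<le> int n - int j * int (qq m n 0)" and "int (dd m n j) = int n - int j * int (qq m n 0)"
    and "dd m n j < n"
proof -
  obtain q0 where m: "m = n * q0" using assms(1) by (rule dvdE)
  have q0: "qq m n 0 = q0" using assms(2) by (simp add: qq_def m)
  then obtain p where p: "q0 = Suc p" using qq_0_pos[OF assms(1)] assms(3,4) by (cases q0) auto
  have "(n + j) * qq m n j + dd m n j = m - j"
    unfolding qq_def dd_def by (rule mult_div_mod_eq)
  then have "(n + j) * p + dd m n j + j = n * Suc p"
    using assms(4,5) m q0 p by simp
  then have d: "dd m n j + j * qq m n 0 = n"
    by (simp add: q0 p algebra_simps)
  then show "int (dd m n j) = int n - int j * int (qq m n 0)"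
    by (metis add_diff_cancel_right' of_nat_add of_nat_mult)
  with d show "0 \<le> int n - int j * int (qq m n 0)"
    by (metis of_nat_0_le_iff)
  have "0 < j * qq m n 0" using assms(3) q0 p by simp
  with d show "dd m n j < n" by linarith
qed


lemma calL_expansion:
  assumes "0 < n" and g: "g holomorphic_on disc"
    and L0: "L0 \<in> Wg g m n"
    and Lj: "\<forall>j\<in>{1..m}. Lj j \<in> opspan (Wg g (m - j) (n + j))"
    and Lg: "eq_on_H0 Lg (\<lambda>f z. L0 f z + (\<Sum>j=1..m. Lj j f z))"
  shows "\<exists>a. eq_on_H0 Lg (\<lambda>f z. calL g m n 0 f z + (\<Sum>j=1..m. a j * calL g m n j f z))"
proof -
  let ?M = "ST_monomial g (m + n) m"
  have calL_leads: "leads g (m + n) (m - j) (calL g m n j)" if "j \<le> m" for j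
  proof -
    have "m - j + (n + j) = m + n" using that by simp
    then show ?thesis using Wg_leads[OF g calL_in_Wg[OF \<open>0 < n\<close>, of g m j]] by metis
  qed
  have "below g (m + n) m (Lj j)" if j: "j \<in> {1..m}" for j
  proof (rule opspan_below[OF _ Lj[rule_format, OF j]])
    fix K assume "K \<in> Wg g (m - j) (n + j)"
    then have "leads g (m + n) (m - j) K" using Wg_leads[OF g] j by fastforce
    then show "below g (m + n) m K" using j by (auto dest: leads_imp_below intro: below_mono)
  qed
  then have "below g (m + n) m (\<lambda>f z. \<Sum>j\<in>{1..m}. 1 * Lj j f z)"
    by (intro below_sum) simp_all
  moreover have "below g (m + n) m (\<lambda>f z. L0 f z - ?M f z)"
    using Wg_leads[OF g L0] unfolding leads_def .
  moreover have "below g (m + n) m (\<lambda>f z. calL g m n 0 f z - ?M f z)"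
    using calL_leads[of 0] unfolding leads_def by simp
  ultimately have "below g (m + n) m (\<lambda>f z. ((L0 f z - ?M f z) + (\<Sum>j\<in>{1..m}. 1 * Lj j f z))
      + (-1) * (calL g m n 0 f z - ?M f z))"
    by (intro below_add below_scale)
  then have "below g (m + n) m (\<lambda>f z. Lg f z - calL g m n 0 f z)"
    by (rule below_cong[rotated]) (use Lg in \<open>simp add: eq_on_H0_iff\<close>)
  moreover have "leads g (m + n) i (calL g m n (m - i))" if "i < m" for i
    using calL_leads[of "m - i"] that by simp
  ultimately obtain a where
    a: "eq_on_H0 (\<lambda>f z. Lg f z - calL g m n 0 f z) (\<lambda>f z. \<Sum>i<m. a i * calL g m n (m - i) f z)"
    using below_triangular[where B="\<lambda>i. calL g m n (m - i)"] by blast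
  have "(\<Sum>i<m. a i * calL g m n (m - i) f z) = (\<Sum>j=1..m. a (m - j) * calL g m n j f z)" for f z
    by (rule sum.reindex_bij_witness[where i="\<lambda>j. m - j" and j="\<lambda>i. m - i"]) auto
  with a have "eq_on_H0 Lg (\<lambda>f z. calL g m n 0 f z + (\<Sum>j=1..m. a (m - j) * calL g m n j f z))"
    by (simp add: eq_on_H0_iff diff_eq_eq add.commute)
  then show ?thesis by (rule exI[of _ "\<lambda>j. a (m - j)"])
qed

lemma calL_0_if_dvd: "n dvd m \<Longrightarrow> calL g m n 0 = ((Sop g ^^ qq m n 0) \<circ> Top g) ^^ n"
  by (simp add: calL_def dd_def)

lemma sum_split_qq:
  assumes "n dvd m" "0 < n"
  shows "(\<Sum>j=1..m. F j) = (\<Sum>j\<in>{j\<in>{1..m}. qq m n j = qq m n 0 - 1}. F j)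
                         + (\<Sum>j\<in>{j\<in>{1..m}. qq m n j < qq m n 0 - 1}. F j)"
proof -
  have "{1..m} = {j\<in>{1..m}. qq m n j = qq m n 0 - 1} \<union> {j\<in>{1..m}. qq m n j < qq m n 0 - 1}"
    using qq_less_qq_0[OF assms] by fastforce
  then have "(\<Sum>j=1..m. F j)
      = sum F ({j\<in>{1..m}. qq m n j = qq m n 0 - 1} \<union> {j\<in>{1..m}. qq m n j < qq m n 0 - 1})"
    by (rule arg_cong)
  also have "\<dots> = (\<Sum>j\<in>{j\<in>{1..m}. qq m n j = qq m n 0 - 1}. F j)
                + (\<Sum>j\<in>{j\<in>{1..m}. qq m n j < qq m n 0 - 1}. F j)"
    by (rule sum.union_disjoint) auto
  finally show ?thesis .
qed

lemma calL_expansion_if_dvd: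
  assumes "n dvd m" "0 < n"
    and "\<exists>a. eq_on_H0 Lg (\<lambda>f z. calL g m n 0 f z + (\<Sum>j=1..m. a j * calL g m n j f z))"
  shows "\<exists>c. eq_on_H0 Lg (\<lambda>f z. (((Sop g ^^ qq m n 0) \<circ> Top g) ^^ n) f z
            + (\<Sum>j\<in>{j\<in>{1..m}. qq m n j = qq m n 0 - 1}. c j * calL g m n j f z)
            + (\<Sum>j\<in>{j\<in>{1..m}. qq m n j < qq m n 0 - 1}. c j * calL g m n j f z))"
proof -
  obtain a where "eq_on_H0 Lg (\<lambda>f z. calL g m n 0 f z + (\<Sum>j=1..m. a j * calL g m n j f z))"
    using assms(3) by blast
  then have "eq_on_H0 Lg (\<lambda>f z. (((Sop g ^^ qq m n 0) \<circ> Top g) ^^ n) f z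
            + (\<Sum>j\<in>{j\<in>{1..m}. qq m n j = qq m n 0 - 1}. a j * calL g m n j f z)
            + (\<Sum>j\<in>{j\<in>{1..m}. qq m n j < qq m n 0 - 1}. a j * calL g m n j f z))"
    unfolding calL_0_if_dvd[OF assms(1)] eq_on_H0_iff
    by (simp only: sum_split_qq[OF assms(1,2)] add.assoc)
  then show ?thesis by blast
qed

theorem corollary2p2:
  fixes m n :: nat and g :: cfun and Lg L0 :: cop and Lj :: "nat \<Rightarrow> cop"
  assumes "m \<ge> 1" and "n \<ge> 1"
    and "g holomorphic_on ball 0 1"
    and "g_operator g Lg"
    and "L0 \<in> Wg g m n"
    and "\<forall>j\<in>{1..m}. Lj j \<in> opspan (Wg g (m - j) (n + j))"
    and "eq_on_H0 Lg (\<lambda>f z. L0 f z + (\<Sum>j=1..m. Lj j f z))"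
  shows "(\<exists>a :: nat \<Rightarrow> complex.
            eq_on_H0 Lg (\<lambda>f z. calL g m n 0 f z + (\<Sum>j=1..m. a j * calL g m n j f z)))
       \<and> (n dvd m \<longrightarrow>
            qq m n 0 \<ge> 1 \<and> (\<forall>j\<in>{1..m}. qq m n j < qq m n 0) \<and>
            (\<exists>c :: nat \<Rightarrow> complex.
               eq_on_H0 Lg (\<lambda>f z. (((Sop g ^^ qq m n 0) \<circ> Top g) ^^ n) f z
                 + (\<Sum>j\<in>{j\<in>{1..m}. qq m n j = qq m n 0 - 1}. c j * calL g m n j f z)
                 + (\<Sum>j\<in>{j\<in>{1..m}. qq m n j < qq m n 0 - 1}. c j * calL g m n j f z))))
       \<and> (\<forall>j\<in>{1..m}. n dvd m \<and> qq m n j = qq m n 0 - 1 \<longrightarrow>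
            0 \<le> int n - int j * int (qq m n 0) \<and>
            int (dd m n j) = int n - int j * int (qq m n 0) \<and> dd m n j < n)"
proof -
  have "0 < m" "0 < n" using assms(1,2) by simp_all
  have expansion: "\<exists>a. eq_on_H0 Lg (\<lambda>f z. calL g m n 0 f z + (\<Sum>j=1..m. a j * calL g m n j f z))"
    using calL_expansion[OF \<open>0 < n\<close> assms(3,5,6,7)] .
  show ?thesis
    using expansion calL_expansion_if_dvd[OF _ \<open>0 < n\<close> expansion] qq_0_pos[OF _ \<open>0 < m\<close>]
      qq_less_qq_0[OF _ \<open>0 < n\<close>] dd_eq_if_qq_eq_qq_0_minus_1[OF _ \<open>0 < n\<close>]
    by simp
qed

end
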